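(* Let $K$ be a compact metric space and $\{\mu_j\}$ a sequence of finite positive regular Borel measures on $K$ converging weak-* in $C(K)^*$ to a finite positive Borel measure $\mu$. Suppose $\operatorname{supp}\mu_j\cap\operatorname{supp}\mu=\emptyset$ for all $j$. Then the measures $\mu_j$ converge weak-* to $\mu$ regularly.
   Context: Weak-* convergence means $\int h\,d\mu_j\to\int h\,d\mu$ for all $h\in C(K)$. The convergence is called regular if, in addition, for every $\mu$-measurable set $A\subset K_0=\operatorname{supp}\mu$ and every $\varepsilon>0$ there are an open set $O\subset K$ with $A\subset O$ and an index $j_0$ such that $\mu_j(O)<\mu(A)+\varepsilon$ for all $j\ge j_0$. *)

theory Defs
  imports "HOL-Analysis.Analysis"
begin

definition borel_on :: "'a::metric_space set \<Rightarrow> 'a measure \<Rightarrow> bool" where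
  "borel_on K M \<longleftrightarrow> sets M = sets (restrict_space borel K)"

definition regular_on :: "'a::metric_space set \<Rightarrow> 'a measure \<Rightarrow> bool" where
  "regular_on K M \<longleftrightarrow> (\<forall>B\<in>sets M.
      emeasure M B = (INF U\<in>{U. openin (top_of_set K) U \<and> B \<subseteq> U}. emeasure M U) \<and>
      emeasure M B = (SUP C\<in>{C. compact C \<and> C \<subseteq> B}. emeasure M C))"

definition supp_on :: "'a::metric_space set \<Rightarrow> 'a measure \<Rightarrow> 'a set" where
  "supp_on K M = {x\<in>K. \<forall>U. openin (top_of_set K) U \<and> x \<in> U \<longrightarrow> emeasure M U > 0}"

definition weak_star_conv :: "'a::metric_space set \<Rightarrow> (nat \<Rightarrow> 'a measure) \<Rightarrow> 'a measure \<Rightarrow> bool" where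
  "weak_star_conv K \<mu>s \<mu> \<longleftrightarrow> (\<forall>h::'a \<Rightarrow> real. continuous_on K h \<longrightarrow>
      (\<lambda>j. \<integral>x. h x \<partial>(\<mu>s j)) \<longlonglongrightarrow> (\<integral>x. h x \<partial>\<mu>))"

text \<open>Regular weak-* convergence; mu-measurable sets are those of the completion of mu.\<close>
definition regular_conv :: "'a::metric_space set \<Rightarrow> (nat \<Rightarrow> 'a measure) \<Rightarrow> 'a measure \<Rightarrow> bool" where
  "regular_conv K \<mu>s \<mu> \<longleftrightarrow> weak_star_conv K \<mu>s \<mu> \<and>
     (\<forall>A \<in> sets (completion \<mu>). A \<subseteq> supp_on K \<mu> \<longrightarrow>
       (\<forall>\<epsilon>>0. \<exists>U j0. openin (top_of_set K) U \<and> A \<subseteq> U \<and>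
          (\<forall>j\<ge>j0. measure (\<mu>s j) U < measure (completion \<mu>) A + \<epsilon>)))"

end

theory Submission
  imports Defs
begin

(* Let S be the (compact) support of the limit measure mu.  Since S misses the support
   of mu_j, each mu_j vanishes on an open neighbourhood W_j of S.  Given a set A <= S
   measurable for the completion of mu and eps > 0, we
   (1) enlarge A to a Borel set B of the same measure and, by outer regularity of finite
       Borel measures on closed subsets of metric spaces, to a relatively open V with
       mu(V) < mu(A) + eps;
   (2) exhaust V by relatively open sets V_n on which continuous functions below the
       indicator of V equal 1, so that weak-* convergence gives mu_j(V_n) < mu(A) + eps
       for j >= J_n;
   (3) glue these bounds together diagonally: U = Union_n (V_n Int W_0 Int ... Int W_(L_n - 1))
       is open, contains A, and for large j the part of U where mu_j lives lies in one V_m. *)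

lemma space_borel_on:
  assumes "borel_on K M"
  shows "space M = K"
  using sets_eq_imp_space_eq[OF assms[unfolded borel_on_def]]
  by (simp add: space_restrict_space)

lemma openin_in_sets_borel_on:
  assumes "borel_on K M" "openin (top_of_set K) U"
  shows "U \<in> sets M"
proof -
  obtain T where "open T" "U = K \<inter> T" using assms(2) openin_open by blast
  then show ?thesis using assms(1) by (auto simp: borel_on_def sets_restrict_space)
qed

lemma closedin_in_sets_borel_on:
  assumes "borel_on K M" "closedin (top_of_set K) F"
  shows "F \<in> sets M"
proof -
  obtain T where "closed T" "F = K \<inter> T" using assms(2) closedin_closed by blast
  then show ?thesis using assms(1) by (auto simp: borel_on_def sets_restrict_space)
qed

lemma (in finite_measure) measure_UN_le_geometric:
  assumes "\<And>i. G i \<in> sets M" "\<And>i. measure M (G i) \<le> e * (1/2)^i"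
  shows "measure M (\<Union>i. G i) \<le> 2 * e"
proof -
  have geo: "(\<lambda>i. e * (1/2)^i) sums (2 * e)"
    using sums_mult[OF geometric_sums[of "1/2::real"], of e] by (simp add: mult.commute)
  have sg: "summable (\<lambda>i. measure M (G i))"
    by (rule summable_comparison_test'[OF sums_summable[OF geo], of 0]) (use assms(2) in auto)
  have "measure M (\<Union>i. G i) \<le> (\<Sum>i. measure M (G i))"
    using assms(1) sg by (intro finite_measure_subadditive_countably) auto
  also have "\<dots> \<le> (\<Sum>i. e * (1/2)^i)"
    using assms(2) sg sums_summable[OF geo] by (intro suminf_le) auto
  also have "\<dots> = 2 * e" using geo by (simp add: sums_iff)
  finally show ?thesis .
qed

lemma closed_outer_approx:
  fixes K :: "'a::metric_space set"
  assumes "finite_measure M" "borel_on K M" "closed C" "e > 0"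
  obtains U where "openin (top_of_set K) U" "K \<inter> C \<subseteq> U" "measure M (U - K \<inter> C) < e"
proof (cases "C = {}")
  case True
  then show ?thesis using that[of "{}"] \<open>e > 0\<close> by simp
next
  case False
  interpret finite_measure M by fact
  define U where "U n = K \<inter> {x. infdist x C < 1 / real (Suc n)}" for n
  have U_open: "openin (top_of_set K) (U n)" for n
    unfolding U_def by (intro openin_open_Int open_Collect_less continuous_intros)
  have U_sets: "U n \<in> sets M" for n using openin_in_sets_borel_on[OF assms(2) U_open] .
  have CK_sets: "K \<inter> C \<in> sets M"
    using closedin_in_sets_borel_on[OF assms(2)] assms(3) by (simp add: closedin_closed_Int)
  have CU: "K \<inter> C \<subseteq> U n" for n
    unfolding U_def using in_closed_iff_infdist_zero[OF assms(3) False] by auto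
  have "decseq U"
    by (rule decseq_SucI) (auto simp: U_def elim!: less_le_trans intro: frac_le)
  moreover have "(\<Inter>n. U n) = K \<inter> C"
  proof
    show "(\<Inter>n. U n) \<subseteq> K \<inter> C"
    proof
      fix x assume x: "x \<in> (\<Inter>n. U n)"
      have "infdist x C \<le> 0"
      proof (rule field_le_epsilon)
        fix d :: real assume "d > 0"
        then obtain n where "1 / real (Suc n) < d" using nat_approx_posE by blast
        moreover have "infdist x C < 1 / real (Suc n)" using x unfolding U_def by blast
        ultimately show "infdist x C \<le> 0 + d" by linarith
      qed
      then show "x \<in> K \<inter> C"
        using x infdist_nonneg[of x C] in_closed_iff_infdist_zero[OF assms(3) False]
        by (auto simp: U_def)
    qed
  qed (use CU in auto)
  ultimately have "(\<lambda>n. measure M (U n)) \<longlonglongrightarrow> measure M (K \<inter> C)"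
    using finite_Lim_measure_decseq[of U] U_sets by auto
  from order_tendstoD(2)[OF this, of "measure M (K \<inter> C) + e"] \<open>e > 0\<close>
  obtain n where "measure M (U n) < measure M (K \<inter> C) + e"
    by (auto simp: eventually_sequentially)
  moreover have "measure M (U n - K \<inter> C) = measure M (U n) - measure M (K \<inter> C)"
    using U_sets CK_sets CU by (intro measure_Diff) auto
  ultimately have "measure M (U n - K \<inter> C) < e" by linarith
  then show ?thesis using that U_open CU by blast
qed

definition open_closed_approximable :: "'a::topological_space set \<Rightarrow> 'a measure \<Rightarrow> 'a set \<Rightarrow> bool" where
  "open_closed_approximable K M B \<longleftrightarrow>
     (\<forall>e>0. \<exists>U F. openin (top_of_set K) U \<and> closedin (top_of_set K) F \<and>
        F \<subseteq> B \<and> B \<subseteq> U \<and> measure M (U - F) < e)"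

text \<open>Approximable sets are closed under complement in K: swap the roles of K - F and K - U.\<close>
lemma open_closed_approximable_compl:
  assumes "open_closed_approximable K M B"
  shows "open_closed_approximable K M (K - B)"
  unfolding open_closed_approximable_def
proof (intro allI impI)
  fix e :: real assume "e > 0"
  then obtain U F where UF: "openin (top_of_set K) U" "closedin (top_of_set K) F"
      "F \<subseteq> B" "B \<subseteq> U" "measure M (U - F) < e"
    using assms unfolding open_closed_approximable_def by meson
  have "U \<subseteq> K" using openin_subset[OF UF(1)] by simp
  then have "K - (K - U) = U" "(K - F) - (K - U) = U - F" by blast+
  moreover have "openin (top_of_set K) (K - F)" "closedin (top_of_set K) (K - U)"
    using openin_diff[OF openin_subtopology_self UF(2)] closedin_diff[OF closedin_self UF(1)] .
  moreover have "measure M ((K - F) - (K - U)) < e"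
    using calculation(2) UF(5) by simp
  moreover have "K - U \<subseteq> K - B" "K - B \<subseteq> K - F" using UF(3,4) by blast+
  ultimately show "\<exists>U' F'. openin (top_of_set K) U' \<and> closedin (top_of_set K) F' \<and>
      F' \<subseteq> K - B \<and> K - B \<subseteq> U' \<and> measure M (U' - F') < e"
    by meson
qed


text \<open>Approximable sets are closed under countable unions: the open sets are united
  outright, while the closed inner set is the union of finitely many closed inner sets,
  chosen so that the remaining tail of the union has small measure.\<close>
lemma open_closed_approximable_UN:
  fixes D :: "nat \<Rightarrow> 'a::metric_space set"
  assumes fin: "finite_measure M" and sM: "borel_on K M"
    and D: "\<And>i. D i \<in> sets M" "\<And>i. open_closed_approximable K M (D i)"
  shows "open_closed_approximable K M (\<Union>i. D i)"
  unfolding open_closed_approximable_def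
proof (intro allI impI)
  interpret finite_measure M by fact
  fix e :: real assume e: "e > 0"
  have "\<exists>U F. openin (top_of_set K) U \<and> closedin (top_of_set K) F \<and> F \<subseteq> D i \<and> D i \<subseteq> U \<and>
      measure M (U - F) < e/4 * (1/2)^i" for i
  proof -
    have "e/4 * (1/2)^i > 0" using e by simp
    then show ?thesis using D(2)[of i] unfolding open_closed_approximable_def by meson
  qed
  then obtain U F where U: "\<And>i. openin (top_of_set K) (U i)" "\<And>i. D i \<subseteq> U i"
    and F: "\<And>i. closedin (top_of_set K) (F i)" "\<And>i. F i \<subseteq> D i"
    and UF: "\<And>i. measure M (U i - F i) < e/4 * (1/2)^i"
    by metis
  have UF_sets: "U i - F i \<in> sets M" for i
    using openin_in_sets_borel_on[OF sM U(1)] closedin_in_sets_borel_on[OF sM F(1)] by blast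
  have "(\<lambda>N. measure M (\<Union>i\<le>N. D i)) \<longlonglongrightarrow> measure M (\<Union>N. \<Union>i\<le>N. D i)"
    using D(1) by (intro finite_Lim_measure_incseq) (auto simp: incseq_def intro: order_trans)
  moreover have "(\<Union>N. \<Union>i\<le>N. D i) = (\<Union>i. D i)" by auto
  ultimately have "eventually (\<lambda>N. measure M (\<Union>i. D i) - e/2 < measure M (\<Union>i\<le>N. D i)) sequentially"
    using e by (intro order_tendstoD(1)) auto
  then obtain N where N: "measure M (\<Union>i. D i) - e/2 < measure M (\<Union>i\<le>N. D i)"
    unfolding eventually_sequentially by (meson order_refl)
  have tail: "measure M ((\<Union>i. D i) - (\<Union>i\<le>N. D i)) < e/2"
    using N D(1) by (subst measure_Diff) auto
  have "measure M (\<Union>i. U i - F i) \<le> 2 * (e/4)"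
    using UF_sets UF by (intro measure_UN_le_geometric) (auto intro: less_imp_le)
  moreover have "(\<Union>i. U i) - (\<Union>i\<le>N. F i) \<subseteq> (\<Union>i. U i - F i) \<union> ((\<Union>i. D i) - (\<Union>i\<le>N. D i))"
    using F(2) U(2) by blast
  then have "measure M ((\<Union>i. U i) - (\<Union>i\<le>N. F i)) \<le>
      measure M (\<Union>i. U i - F i) + measure M ((\<Union>i. D i) - (\<Union>i\<le>N. D i))"
    using UF_sets D(1) by (intro order_trans[OF finite_measure_mono measure_Un_le]) auto
  ultimately have "measure M ((\<Union>i. U i) - (\<Union>i\<le>N. F i)) < e"
    using tail by linarith
  moreover have "closedin (top_of_set K) (\<Union>i\<le>N. F i)"
    using F(1) by (intro closedin_Union) auto
  moreover have "openin (top_of_set K) (\<Union>i. U i)" using U(1) by blast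
  moreover have "(\<Union>i\<le>N. F i) \<subseteq> (\<Union>i. D i)" "(\<Union>i. D i) \<subseteq> (\<Union>i. U i)"
    using U(2) F(2) by blast+
  ultimately show "\<exists>U' F'. openin (top_of_set K) U' \<and> closedin (top_of_set K) F' \<and>
      F' \<subseteq> (\<Union>i. D i) \<and> (\<Union>i. D i) \<subseteq> U' \<and> measure M (U' - F') < e"
    by meson
qed

text \<open>The approximable sets form a Dynkin system containing the traces of closed sets.\<close>
lemma finite_borel_approximable:
  fixes K :: "'a::metric_space set"
  assumes fin: "finite_measure M" and sM: "borel_on K M" and "closed K" and B: "B \<in> sets M"
  shows "open_closed_approximable K M B"
proof -
  have "K \<in> sigma_sets UNIV (Collect closed)" using \<open>closed K\<close> by auto
  then have gen: "sets M = sigma_sets K ((\<inter>) K ` Collect closed)"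
    using sM sigma_sets_Int[of K UNIV "Collect closed"]
    by (simp add: borel_on_def sets_restrict_space borel_eq_closed)
  have "Int_stable ((\<inter>) K ` Collect closed)"
    unfolding Int_stable_def
  proof safe
    fix a b :: "'a set" assume "closed a" "closed b"
    then show "K \<inter> a \<inter> (K \<inter> b) \<in> (\<inter>) K ` Collect closed"
      by (intro image_eqI[of _ _ "a \<inter> b"]) auto
  qed
  moreover have "(\<inter>) K ` Collect closed \<subseteq> Pow K" by auto
  ultimately show ?thesis
    using B unfolding gen
  proof (induction B rule: sigma_sets_induct_disjoint)
    case (basic A)
    then obtain C where C: "closed C" "A = K \<inter> C" by auto
    show ?case unfolding open_closed_approximable_def
    proof (intro allI impI)
      fix e :: real assume "e > 0"
      then obtain U where "openin (top_of_set K) U" "A \<subseteq> U" "measure M (U - A) < e"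
        using closed_outer_approx[OF fin sM C(1)] C(2) by metis
      then show "\<exists>U F. openin (top_of_set K) U \<and> closedin (top_of_set K) F \<and>
          F \<subseteq> A \<and> A \<subseteq> U \<and> measure M (U - F) < e"
        using C by (intro exI[of _ U] exI[of _ A]) (auto simp: closedin_closed_Int)
    qed
  next
    case empty
    then show ?case by (auto simp: open_closed_approximable_def intro!: exI[of _ "{}"])
  next
    case (compl A)
    from compl(2) show ?case by (rule open_closed_approximable_compl)
  next
    case (union D)
    then show ?case using gen by (intro open_closed_approximable_UN[OF fin sM]) auto
  qed
qed

lemma finite_borel_outer_regular:
  fixes K :: "'a::metric_space set"
  assumes fin: "finite_measure M" and sM: "borel_on K M" and "closed K"
    and B: "B \<in> sets M" and e: "e > 0"
  obtains U where "openin (top_of_set K) U" "B \<subseteq> U" "measure M U < measure M B + e"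
proof -
  interpret finite_measure M by fact
  obtain U F where UF: "openin (top_of_set K) U" "closedin (top_of_set K) F"
      "F \<subseteq> B" "B \<subseteq> U" "measure M (U - F) < e"
    using finite_borel_approximable[OF assms(1-4)] e unfolding open_closed_approximable_def by meson
  have "measure M U - measure M B \<le> measure M (U - F)"
    using UF openin_in_sets_borel_on[OF sM UF(1)] closedin_in_sets_borel_on[OF sM UF(2)] B
    by (subst measure_Diff[symmetric]) (auto intro!: finite_measure_mono)
  then show ?thesis using that UF by force
qed

text \<open>The support of a measure on a compact set is compact: its complement in K is a
  union of relatively open null sets.\<close>
lemma compact_supp_on:
  fixes K :: "'a::metric_space set"
  assumes "compact K"
  shows "compact (supp_on K M)"
proof -
  have "openin (top_of_set K) (K - supp_on K M)"
  proof (subst openin_subopen, intro ballI)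
    fix x assume "x \<in> K - supp_on K M"
    then obtain U where U: "openin (top_of_set K) U" "x \<in> U" "\<not> emeasure M U > 0"
      unfolding supp_on_def by auto
    have "U \<subseteq> K - supp_on K M" using U openin_subset[OF U(1)] unfolding supp_on_def by auto
    then show "\<exists>T. openin (top_of_set K) T \<and> x \<in> T \<and> T \<subseteq> K - supp_on K M" using U by blast
  qed
  then have "closedin (top_of_set K) (supp_on K M)"
    by (simp add: closedin_def supp_on_def)
  then show ?thesis using closedin_compact[OF assms] by blast
qed

text \<open>A compact set avoiding the support of M has an open neighbourhood which is
  M-null (inside K): cover it by finitely many null neighbourhoods.\<close>
lemma null_neighbourhood_off_support:
  fixes K :: "'a::metric_space set"
  assumes sM: "borel_on K M" and S: "compact S" "S \<subseteq> K" "S \<inter> supp_on K M = {}"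
  obtains W where "open W" "S \<subseteq> W" "emeasure M (K \<inter> W) = 0"
proof -
  have "\<forall>x\<in>S. \<exists>T. open T \<and> x \<in> T \<and> K \<inter> T \<in> null_sets M"
  proof
    fix x assume "x \<in> S"
    then have "x \<in> K" "x \<notin> supp_on K M" using S by blast+
    then obtain U where U: "openin (top_of_set K) U" "x \<in> U" "emeasure M U = 0"
      unfolding supp_on_def by (auto simp: not_gr_zero)
    moreover obtain T where "open T" "U = K \<inter> T" using U(1) openin_open by blast
    ultimately show "\<exists>T. open T \<and> x \<in> T \<and> K \<inter> T \<in> null_sets M"
      using openin_in_sets_borel_on[OF sM U(1)] by (intro exI[of _ T]) auto
  qed
  then obtain T where "\<forall>x\<in>S. open (T x) \<and> x \<in> T x \<and> K \<inter> T x \<in> null_sets M"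
    by (rule bchoice[elim_format]) blast
  then have T: "\<And>x. x \<in> S \<Longrightarrow> open (T x)" "\<And>x. x \<in> S \<Longrightarrow> x \<in> T x"
      "\<And>x. x \<in> S \<Longrightarrow> K \<inter> T x \<in> null_sets M"
    by auto
  have cover: "S \<subseteq> (\<Union>x\<in>S. T x)" using T(2) by blast
  obtain C where C: "C \<subseteq> S" "finite C" "S \<subseteq> (\<Union>x\<in>C. T x)"
    by (rule compactE_image[OF S(1) T(1) cover])
  have null: "(\<Union>x\<in>C. K \<inter> T x) \<in> null_sets M"
    using C(1,2) T(3) by (intro null_sets_UN' countable_finite) auto
  have "K \<inter> (\<Union>x\<in>C. T x) = (\<Union>x\<in>C. K \<inter> T x)" by blast
  then have "emeasure M (K \<inter> (\<Union>x\<in>C. T x)) = 0" using null_setsD1[OF null] by simp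
  moreover have "open (\<Union>x\<in>C. T x)" using C(1) T(1) by (intro open_UN) blast
  ultimately show ?thesis using C(3) by (intro that)
qed

lemma completion_measurable_hull:
  assumes "A \<in> sets (completion M)"
  obtains B where "B \<in> sets M" "A \<subseteq> B" "measure M B = measure (completion M) A"
proof -
  obtain S N N' where SN: "A = S \<union> N" "N \<subseteq> N'" "N' \<in> null_sets M" "S \<in> sets M"
    using sets_completionE[OF assms] by metis
  have "N \<in> null_sets (completion M)"
    using SN(2,3) null_sets_completion_iff2 by blast
  then have "measure (completion M) A = measure M S"
    using SN by (simp add: measure_Un_null_set)
  moreover have "measure M (S \<union> N') = measure M S"
    using SN by (simp add: measure_Un_null_set)
  ultimately show ?thesis using that[of "S \<union> N'"] SN by auto
qed

lemma open_positivity_set: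
  fixes G :: "'a::metric_space set"
  assumes "open G"
  obtains d :: "'a \<Rightarrow> real" where "continuous_on UNIV d" "\<And>x. d x \<ge> 0" "G = {x. d x > 0}"
proof (cases "G = UNIV")
  case True
  then show ?thesis using that[of "\<lambda>_. 1"] by auto
next
  case False
  have "infdist x (- G) > 0 \<longleftrightarrow> x \<in> G" for x
  proof -
    have "x \<in> - G \<longleftrightarrow> infdist x (- G) = 0"
      using assms False by (intro in_closed_iff_infdist_zero) auto
    then show ?thesis using infdist_nonneg[of x "- G"] by auto
  qed
  then show ?thesis
    by (intro that[of "\<lambda>x. infdist x (- G)"] continuous_on_infdist continuous_on_id)
      (auto simp: infdist_nonneg)
qed

lemma integrable_continuous_on_borel_on:
  fixes f :: "'a::metric_space \<Rightarrow> real"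
  assumes "finite_measure M" "borel_on K M" "continuous_on K f" "\<And>x. \<bar>f x\<bar> \<le> B"
  shows "integrable M f"
proof (rule finite_measure.integrable_const_bound[OF assms(1), where B=B])
  show "AE x in M. norm (f x) \<le> B" using assms(4) by simp
  show "f \<in> borel_measurable M"
    by (subst measurable_cong_sets[OF assms(2)[unfolded borel_on_def] refl])
      (rule borel_measurable_continuous_on_restrict[OF assms(3)])
qed

lemma (in finite_measure) measure_le_integral:
  assumes "T \<in> sets M" "integrable M f" "\<And>x. x \<in> space M \<Longrightarrow> indicator T x \<le> f x"
  shows "measure M T \<le> (\<integral>x. f x \<partial>M)"
proof -
  have "measure M T = (\<integral>x. indicator T x \<partial>M)" using assms(1) by simp
  also have "\<dots> \<le> (\<integral>x. f x \<partial>M)"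
    using assms by (intro integral_mono) (auto simp: emeasure_eq_measure)
  finally show ?thesis .
qed

lemma (in finite_measure) integral_le_measure:
  assumes "T \<in> sets M" "integrable M f" "\<And>x. x \<in> space M \<Longrightarrow> f x \<le> indicator T x"
  shows "(\<integral>x. f x \<partial>M) \<le> measure M T"
proof -
  have "(\<integral>x. f x \<partial>M) \<le> (\<integral>x. indicator T x \<partial>M)"
    using assms by (intro integral_mono) (auto simp: emeasure_eq_measure)
  also have "\<dots> = measure M T" using assms(1) by simp
  finally show ?thesis .
qed

text \<open>Take f n = min 1 ((n+1) d) for a continuous d \<ge> 0
  with positivity set an open G such that V = K \<inter> G, and V n = {x \<in> K. (n+1) d x > 1}.\<close>
lemma continuous_exhaustion_of_open:
  fixes K :: "'a::metric_space set"
  assumes V: "openin (top_of_set K) V"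
  obtains f :: "nat \<Rightarrow> 'a \<Rightarrow> real" and Vn :: "nat \<Rightarrow> 'a set"
  where "\<And>n. continuous_on K (f n)" "\<And>n x. \<bar>f n x\<bar> \<le> 1"
    "\<And>n x. indicator (Vn n) x \<le> f n x" "\<And>n x. x \<in> K \<Longrightarrow> f n x \<le> indicator V x"
    "\<And>n. openin (top_of_set K) (Vn n)" "incseq Vn" "V = (\<Union>n. Vn n)"
proof -
  obtain G where G: "open G" "V = K \<inter> G" using V openin_open by blast
  obtain d :: "'a \<Rightarrow> real" where d: "continuous_on UNIV d" "\<And>x. d x \<ge> 0" "G = {x. d x > 0}"
    using open_positivity_set[OF G(1)] by blast
  define f where "f n x = min 1 (real (Suc n) * d x)" for n x
  define Vn where "Vn n = K \<inter> {x. 1 < real (Suc n) * d x}" for n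
  have d_cont: "continuous_on UNIV (\<lambda>x. real (Suc n) * d x)" for n
    by (intro continuous_on_mult continuous_on_const d(1))
  have "continuous_on K (f n)" for n
    unfolding f_def
    by (rule continuous_on_subset[OF _ subset_UNIV]) (intro continuous_on_min continuous_on_const d_cont)
  moreover have "\<bar>f n x\<bar> \<le> 1" "indicator (Vn n) x \<le> f n x" for n x
  proof -
    have "0 \<le> real (Suc n) * d x" using d(2)[of x] by simp
    then show "\<bar>f n x\<bar> \<le> 1" "indicator (Vn n) x \<le> f n x"
      by (auto simp: f_def Vn_def indicator_def)
  qed
  moreover have "f n x \<le> indicator V x" if "x \<in> K" for n x
    using that G d(2)[of x] d(3) by (cases "x \<in> V") (auto simp: f_def)
  moreover have "openin (top_of_set K) (Vn n)" for n
    unfolding Vn_def by (intro openin_open_Int open_Collect_less continuous_on_const d_cont)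
  moreover have "incseq Vn"
  proof (rule incseq_SucI)
    fix n
    have "real (Suc n) * d x \<le> real (Suc (Suc n)) * d x" for x
      using d(2)[of x] by (intro mult_right_mono) auto
    then show "Vn n \<subseteq> Vn (Suc n)" unfolding Vn_def by (auto intro: less_le_trans)
  qed
  moreover have "V = (\<Union>n. Vn n)"
  proof safe
    fix x assume "x \<in> V"
    then have "x \<in> K" "d x > 0" using G d(3) by auto
    then obtain n where "1 < real n * d x" using ex_less_of_nat_mult by blast
    moreover have "real n * d x \<le> real (Suc n) * d x" using d(2)[of x] by (intro mult_right_mono) auto
    ultimately have "x \<in> Vn n" using \<open>x \<in> K\<close> unfolding Vn_def by auto
    then show "x \<in> (\<Union>n. Vn n)" by blast
  next
    fix x n assume "x \<in> Vn n"
    then have "x \<in> K" "1 < real (Suc n) * d x" unfolding Vn_def by auto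
    moreover from this(2) have "d x > 0" using d(2)[of x] by (cases "d x = 0") auto
    ultimately show "x \<in> V" using G d(3) by auto
  qed
  ultimately show ?thesis by (rule that)
qed

text \<open>Indeed
  \<mu>s j (V n) \<le> \<integral> f n d\<mu>s j, which tends to \<integral> f n d\<mu> \<le> \<mu> V < c.\<close>
lemma weak_star_open_exhaustion:
  fixes K :: "'a::metric_space set"
  assumes conv: "weak_star_conv K \<mu>s \<mu>"
    and sMj: "\<And>j. borel_on K (\<mu>s j)" and finj: "\<And>j. finite_measure (\<mu>s j)"
    and sM: "borel_on K \<mu>" and fin: "finite_measure \<mu>"
    and V: "openin (top_of_set K) V" and c: "measure \<mu> V < c"
  obtains Vn :: "nat \<Rightarrow> 'a set" and J :: "nat \<Rightarrow> nat"
  where "\<And>n. openin (top_of_set K) (Vn n)" "incseq Vn" "V = (\<Union>n. Vn n)"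
    "\<And>n j. J n \<le> j \<Longrightarrow> measure (\<mu>s j) (Vn n) < c"
proof -
  obtain f :: "nat \<Rightarrow> 'a \<Rightarrow> real" and Vn
    where f: "\<And>n. continuous_on K (f n)" "\<And>n x. \<bar>f n x\<bar> \<le> 1"
      "\<And>n x. indicator (Vn n) x \<le> f n x" "\<And>n x. x \<in> K \<Longrightarrow> f n x \<le> indicator V x"
    and Vn: "\<And>n. openin (top_of_set K) (Vn n)" "incseq Vn" "V = (\<Union>n. Vn n)"
    by (rule continuous_exhaustion_of_open[OF V]) (rule that)
  have f_int: "integrable M (f n)" if "finite_measure M" "borel_on K M" for M n
    by (rule integrable_continuous_on_borel_on[OF that f(1) f(2)])
  have "\<exists>J. \<forall>j\<ge>J. measure (\<mu>s j) (Vn n) < c" for n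
  proof -
    have "(\<integral>x. f n x \<partial>\<mu>) \<le> measure \<mu> V"
      using openin_in_sets_borel_on[OF sM V] f_int[OF fin sM] f(4) space_borel_on[OF sM]
      by (intro finite_measure.integral_le_measure[OF fin]) auto
    then have "(\<integral>x. f n x \<partial>\<mu>) < c" using c by linarith
    moreover have "(\<lambda>j. \<integral>x. f n x \<partial>\<mu>s j) \<longlonglongrightarrow> (\<integral>x. f n x \<partial>\<mu>)"
      using conv f(1) unfolding weak_star_conv_def by simp
    ultimately have "eventually (\<lambda>j. (\<integral>x. f n x \<partial>\<mu>s j) < c) sequentially"
      by (intro order_tendstoD(2))
    then obtain J where J: "\<And>j. J \<le> j \<Longrightarrow> (\<integral>x. f n x \<partial>\<mu>s j) < c"
      unfolding eventually_sequentially by meson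
    have "measure (\<mu>s j) (Vn n) \<le> (\<integral>x. f n x \<partial>\<mu>s j)" for j
      using openin_in_sets_borel_on[OF sMj Vn(1)] f_int[OF finj sMj] f(3)
      by (intro finite_measure.measure_le_integral[OF finj]) auto
    then show ?thesis using J by (meson le_less_trans)
  qed
  then obtain J where "\<And>n j. J n \<le> j \<Longrightarrow> measure (\<mu>s j) (Vn n) < c" by metis
  with Vn show ?thesis by (rule that)
qed

lemma last_index_below:
  fixes L :: "nat \<Rightarrow> nat"
  assumes "\<And>n. n \<le> L n" "L 0 \<le> j"
  obtains m where "L m \<le> j" "\<And>n. L n \<le> j \<Longrightarrow> n \<le> m"
proof -
  have fin: "finite {n. L n \<le> j}"
    by (rule finite_subset[of _ "{..j}"]) (auto intro: le_trans[OF assms(1)])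
  have "Max {n. L n \<le> j} \<in> {n. L n \<le> j}"
    using fin assms(2) by (intro Max_in) auto
  moreover have "n \<le> Max {n. L n \<le> j}" if "L n \<le> j" for n
    using Max_ge[OF fin] that by simp
  ultimately have "L (Max {n. L n \<le> j}) \<le> j" "\<And>n. L n \<le> j \<Longrightarrow> n \<le> Max {n. L n \<le> j}"
    by auto
  then show ?thesis by (rule that)
qed

text \<open>Then U = \<Union>n. V n \<inter> (\<Inter>j<L n. W j), with L n \<ge> J n growing, is an open set containing A
  with M j U < c for all large j: the part of U outside W j lies in a single V m
  with J m \<le> j.\<close>
lemma diagonal_open_set:
  fixes K :: "'a::metric_space set" and M :: "nat \<Rightarrow> 'a measure"
  assumes fin: "\<And>j. finite_measure (M j)" and sM: "\<And>j. borel_on K (M j)"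
    and V: "\<And>n. openin (top_of_set K) (V n)" "incseq V" "A \<subseteq> (\<Union>n. V n)"
    and W: "\<And>j. open (W j)" "\<And>j. A \<subseteq> W j" "\<And>j. emeasure (M j) (K \<inter> W j) = 0"
    and J: "\<And>n j. J n \<le> j \<Longrightarrow> measure (M j) (V n) < c"
  obtains U j0 where "openin (top_of_set K) U" "A \<subseteq> U" "\<And>j. j0 \<le> j \<Longrightarrow> measure (M j) U < c"
proof -
  define L where "L n = n + (\<Sum>m\<le>n. J m)" for n
  have L_ge: "n \<le> L n" "J n \<le> L n" for n
    unfolding L_def using member_le_sum[of n "{..n}" J] by auto
  define U where "U = (\<Union>n. V n \<inter> (\<Inter>j<L n. W j))"
  have "openin (top_of_set K) U"
    unfolding U_def using V(1) W(1) by (intro openin_Union) (auto intro!: openin_Int_open)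
  moreover have "A \<subseteq> U"
  proof
    fix a assume "a \<in> A"
    then obtain n where "a \<in> V n" using V(3) by blast
    moreover have "a \<in> (\<Inter>j<L n. W j)" using W(2) \<open>a \<in> A\<close> by blast
    ultimately show "a \<in> U" unfolding U_def by blast
  qed
  moreover have "measure (M j) U < c" if j: "L 0 \<le> j" for j
  proof -
    interpret finite_measure "M j" by (rule fin)
    obtain m where m: "L m \<le> j" "\<And>n. L n \<le> j \<Longrightarrow> n \<le> m"
      using last_index_below[of L j, OF L_ge(1) j] by auto
    have U_sub: "U \<subseteq> V m \<union> (K \<inter> W j)"
    proof
      fix x assume "x \<in> U"
      then obtain n where x: "x \<in> V n" "\<forall>i<L n. x \<in> W i" unfolding U_def by blast
      show "x \<in> V m \<union> (K \<inter> W j)"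
      proof (cases "L n \<le> j")
        case True
        then show ?thesis using x(1) m(2) \<open>incseq V\<close> by (auto simp: incseq_def)
      next
        case False
        then show ?thesis using x openin_subset[OF V(1)] by auto
      qed
    qed
    have sets: "V m \<in> sets (M j)" "K \<inter> W j \<in> sets (M j)"
      using openin_in_sets_borel_on[OF sM V(1)] openin_in_sets_borel_on[OF sM openin_open_Int[OF W(1)]]
      by auto
    have "measure (M j) U \<le> measure (M j) (V m \<union> (K \<inter> W j))"
      using sets by (intro finite_measure_mono[OF U_sub]) auto
    also have "\<dots> \<le> measure (M j) (V m) + measure (M j) (K \<inter> W j)"
      by (rule measure_Un_le[OF sets])
    also have "measure (M j) (K \<inter> W j) = 0" using W(3)[of j] by (simp add: measure_def)
    also have "measure (M j) (V m) < c" using J L_ge(2)[of m] m(1) by simp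
    finally show ?thesis by simp
  qed
  ultimately show ?thesis by (rule that)
qed

lemma null_neighbourhoods_of_support:
  fixes K :: "'a::metric_space set"
  assumes "compact K" and sMj: "\<And>j. borel_on K (\<mu>s j)"
    and disj: "\<And>j. supp_on K (\<mu>s j) \<inter> supp_on K \<mu> = {}"
  obtains W where "\<And>j. open (W j)" "\<And>j. supp_on K \<mu> \<subseteq> W j"
    "\<And>j. emeasure (\<mu>s j) (K \<inter> W j) = 0"
proof -
  have S: "compact (supp_on K \<mu>)" "supp_on K \<mu> \<subseteq> K"
    using compact_supp_on[OF assms(1)] unfolding supp_on_def by auto
  have "\<exists>W. open W \<and> supp_on K \<mu> \<subseteq> W \<and> emeasure (\<mu>s j) (K \<inter> W) = 0" for j
  proof -
    have "supp_on K \<mu> \<inter> supp_on K (\<mu>s j) = {}" using disj[of j] by blast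
    from null_neighbourhood_off_support[OF sMj S this] show ?thesis by blast
  qed
  then obtain W where "\<And>j. open (W j) \<and> supp_on K \<mu> \<subseteq> W j \<and> emeasure (\<mu>s j) (K \<inter> W j) = 0"
    by metis
  then have "\<And>j. open (W j)" "\<And>j. supp_on K \<mu> \<subseteq> W j" "\<And>j. emeasure (\<mu>s j) (K \<inter> W j) = 0"
    by auto
  then show ?thesis by (rule that)
qed

lemma regular_conv_bound:
  fixes K :: "'a::metric_space set"
  assumes "closed K" and conv: "weak_star_conv K \<mu>s \<mu>"
    and sMj: "\<And>j. borel_on K (\<mu>s j)" and finj: "\<And>j. finite_measure (\<mu>s j)"
    and sM: "borel_on K \<mu>" and fin: "finite_measure \<mu>"
    and W: "\<And>j. open (W j)" "\<And>j. A \<subseteq> W j" "\<And>j. emeasure (\<mu>s j) (K \<inter> W j) = 0"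
    and A: "A \<in> sets (completion \<mu>)" and "\<epsilon> > 0"
  obtains U j0 where "openin (top_of_set K) U" "A \<subseteq> U"
    "\<And>j. j0 \<le> j \<Longrightarrow> measure (\<mu>s j) U < measure (completion \<mu>) A + \<epsilon>"
proof -
  obtain B where B: "B \<in> sets \<mu>" "A \<subseteq> B" "measure \<mu> B = measure (completion \<mu>) A"
    by (rule completion_measurable_hull[OF A])
  obtain V where V: "openin (top_of_set K) V" "B \<subseteq> V" "measure \<mu> V < measure \<mu> B + \<epsilon>"
    by (rule finite_borel_outer_regular[OF fin sM \<open>closed K\<close> B(1) \<open>\<epsilon> > 0\<close>])
  have V_small: "measure \<mu> V < measure (completion \<mu>) A + \<epsilon>" using V(3) B(3) by simp
  obtain Vn J where Vn: "\<And>n. openin (top_of_set K) (Vn n)" "incseq Vn" "V = (\<Union>n. Vn n)"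
    and J: "\<And>n j. J n \<le> j \<Longrightarrow> measure (\<mu>s j) (Vn n) < measure (completion \<mu>) A + \<epsilon>"
    using weak_star_open_exhaustion[OF conv sMj finj sM fin V(1) V_small] by auto
  have A_Vn: "A \<subseteq> (\<Union>n. Vn n)" using B(2) V(2) Vn(3) by auto
  obtain U j0 where "openin (top_of_set K) U" "A \<subseteq> U"
    "\<And>j. j0 \<le> j \<Longrightarrow> measure (\<mu>s j) U < measure (completion \<mu>) A + \<epsilon>"
    using diagonal_open_set[where M=\<mu>s, OF finj sMj Vn(1,2) A_Vn W J] by auto
  then show ?thesis by (rule that)
qed

theorem lemma2p4:
  fixes K :: "'a::metric_space set"
    and \<mu>s :: "nat \<Rightarrow> 'a measure" and \<mu> :: "'a measure"
  assumes "compact K"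
    and "\<And>j. borel_on K (\<mu>s j)" and "\<And>j. finite_measure (\<mu>s j)"
    and "\<And>j. regular_on K (\<mu>s j)"
    and "borel_on K \<mu>" and "finite_measure \<mu>"
    and "weak_star_conv K \<mu>s \<mu>"
    and "\<And>j. supp_on K (\<mu>s j) \<inter> supp_on K \<mu> = {}"
  shows "regular_conv K \<mu>s \<mu>"
proof -
  obtain W where W: "\<And>j. open (W j)" "\<And>j. supp_on K \<mu> \<subseteq> W j"
      "\<And>j. emeasure (\<mu>s j) (K \<inter> W j) = 0"
    by (rule null_neighbourhoods_of_support[where \<mu>s=\<mu>s, OF assms(1,2,8)]) (rule that)
  have "\<exists>U j0. openin (top_of_set K) U \<and> A \<subseteq> U \<and>
      (\<forall>j\<ge>j0. measure (\<mu>s j) U < measure (completion \<mu>) A + \<epsilon>)"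
    if A: "A \<in> sets (completion \<mu>)" "A \<subseteq> supp_on K \<mu>" and "\<epsilon> > 0" for A \<epsilon>
  proof -
    have A_W: "A \<subseteq> W j" for j using A(2) W(2)[of j] by blast
    obtain U j0 where "openin (top_of_set K) U" "A \<subseteq> U"
      "\<And>j. j0 \<le> j \<Longrightarrow> measure (\<mu>s j) U < measure (completion \<mu>) A + \<epsilon>"
      using regular_conv_bound[OF compact_imp_closed[OF assms(1)] assms(7,2,3,5,6) W(1) A_W W(3)
          A(1) \<open>\<epsilon> > 0\<close>] by auto
    then show ?thesis by auto
  qed
  then show ?thesis using assms(7) unfolding regular_conv_def by meson
qed

end
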